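(* For every $n\in\mathbb{N}$, every nonempty chain $c_k$ over $[n]$ with complementary chain $c'_{n-k}$, and all formulas $\varphi,\psi$, the following are derivable in $\mathbf{CPN}_n$: (i) $\vdash_{(n)}\perp_{c_k}\to_{(n)}\neg_{c'_{n-k}}(\varphi\wedge_{(n)}\neg_{c'_{n-k}}\varphi)$; (ii) $\vdash_{(n)}\neg_{c_k}\varphi\wedge_{(n)}\neg_{c_k}\psi\to_{(n)}\neg_{c_k}(\varphi\wedge_{(n)}\psi)$; (iii) $\vdash_{(n)}\neg_{c_k}(\varphi\vee_{(n)}\psi)\to_{(n)}\neg_{c_k}\varphi\vee_{(n)}\neg_{c_k}\psi$; (iv) $\vdash_{(n)}\neg_{c_k}(\varphi\wedge_{(n)}\psi)\to_{(n)}\neg_{c_k}\varphi\vee_{(n)}\neg_{c_k}\psi$; (v) $\vdash_{(n)}\neg_{c_k}\varphi\wedge_{(n)}\neg_{c_k}\psi\to_{(n)}\neg_{c_k}(\varphi\vee_{(n)}\psi)$.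
   Context: Fix $n\in\mathbb{N}$, $n\ge 1$, and write $[n]=\{1,\dots,n\}$. Chains: a chain over $[n]$ is a finite sequence of distinct elements of $[n]$; chains with the same length and the same symbols are identified, so a chain is effectively a subset of $[n]$. $c_k$ denotes a chain with $k$ symbols, $\epsilon$ the empty chain, and $(n)$ the chain consisting of all symbols of $[n]$. For chains $c,d$: the concatenation $c\cdot d$ is the chain of symbols occurring in $c$ or in $d$; the coconcatenation $c\otimes d$ is the chain of symbols occurring in exactly one of $c,d$; $d$ is a subchain of $c$ if every symbol of $d$ is a symbol of $c$. The complementary chain $c'_{n-k}$ of $c_k$ is the chain of the symbols of $[n]$ not occurring in $c_k$. Language of $\mathbf{CPN}_n$: a countable set $P_n$ of propositional letters; constants $\perp_c$ for each chain $c$ over $[n]$ with $1\le |c|\le n-1$, and constants $\perp_{(n)}$ (contradiction) and $\top_{(n)}$ (truth); a unary connective $\neg_c$ for each nonempty chain $c$ over $[n]$ ($\neg_{(n)}$ is the strong negation; the $\neg_c$ with $|c|\le n-1$ are weak negations); a binary connective $\to_{(n)}$. Formulas: propositional letters and constants are formulas; if $\varphi,\psi$ are formulas then so are $\neg_c\varphi$ and $(\varphi\to_{(n)}\psi)$. Conventions: $\neg_\epsilon\varphi:=\varphi$, $\perp_\epsilon:=\top_{(n)}$, and $\perp_c$ for $c=(n)$ means $\perp_{(n)}$. Abbreviations: $\varphi\wedge_{(n)}\psi:=\neg_{(n)}(\varphi\to_{(n)}\neg_{(n)}\psi)$, $\varphi\vee_{(n)}\psi:=\neg_{(n)}\varphi\to_{(n)}\psi$,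 $\varphi\leftrightarrow_{(n)}\psi:=(\varphi\to_{(n)}\psi)\wedge_{(n)}(\psi\to_{(n)}\varphi)$. Axioms of $\mathbf{CPN}_n$, for all formulas $\varphi,\psi,\chi$ and all nonempty chains $c_k,c_r$ over $[n]$: (A1) $\varphi\to_{(n)}(\psi\to_{(n)}\varphi)$; (A2) $(\varphi\to_{(n)}(\psi\to_{(n)}\chi))\to_{(n)}((\varphi\to_{(n)}\psi)\to_{(n)}(\varphi\to_{(n)}\chi))$; (A3) $(\neg_{(n)}\psi\to_{(n)}\neg_{(n)}\varphi)\to_{(n)}((\neg_{(n)}\psi\to_{(n)}\varphi)\to_{(n)}\psi)$; (A4) $\varphi\to_{(n)}(\perp_{c_k}\to_{(n)}\neg_{c_k}\varphi)$; (A5) $\neg_{c_k}\neg_{c_r}\varphi\leftrightarrow_{(n)}\neg_{c_k\otimes c_r}\varphi$; (A6) $\neg_{c_k}\perp_{c_r}\leftrightarrow_{(n)}\perp_{c_k\otimes c_r}$; (A7) $\perp_{c_k}\to_{(n)}\perp_{c_r}$, whenever $c_r$ is a subchain of $c_k$. The only rule of inference is modus ponens (from $\varphi$ and $\varphi\to_{(n)}\psi$ infer $\psi$). For a set $\Sigma$ of formulas, $\Sigma\vdash_{(n)}\varphi$ means there is a finite sequence of formulas ending with $\varphi$, each of which is an axiom, a member of $\Sigma$, or obtained from two earlier members by modus ponens; $\vdash_{(n)}\varphi$ means $\emptyset\vdash_{(n)}\varphi$. *)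

theory Defs
  imports Main
begin

text \<open>Chains over [n] are identified with subsets of {1..n}.\<close>

datatype form =
    Letter nat
  | BotC "nat set"          (* \<bottom>_c, c nonempty; BotC {1..n} is \<bottom>_(n) *)
  | TopC
  | NegC "nat set" form     (* \<not>_c, c nonempty; NegC {1..n} is the strong negation *)
  | ImpC form form

fun wf :: "nat \<Rightarrow> form \<Rightarrow> bool" where
  "wf n (Letter p) = True"
| "wf n (BotC c) = (c \<noteq> {} \<and> c \<subseteq> {1..n})"
| "wf n TopC = True"
| "wf n (NegC c \<phi>) = (c \<noteq> {} \<and> c \<subseteq> {1..n} \<and> wf n \<phi>)"
| "wf n (ImpC \<phi> \<psi>) = (wf n \<phi> \<and> wf n \<psi>)"

definition neg :: "nat set \<Rightarrow> form \<Rightarrow> form" where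
  "neg c \<phi> = (if c = {} then \<phi> else NegC c \<phi>)"

definition bot :: "nat set \<Rightarrow> form" where
  "bot c = (if c = {} then TopC else BotC c)"

definition full :: "nat \<Rightarrow> nat set" where
  "full n = {1..n}"

definition sneg :: "nat \<Rightarrow> form \<Rightarrow> form" where
  "sneg n \<phi> = NegC (full n) \<phi>"

definition conj :: "nat \<Rightarrow> form \<Rightarrow> form \<Rightarrow> form" where
  "conj n \<phi> \<psi> = sneg n (ImpC \<phi> (sneg n \<psi>))"

definition disj :: "nat \<Rightarrow> form \<Rightarrow> form \<Rightarrow> form" where
  "disj n \<phi> \<psi> = ImpC (sneg n \<phi>) \<psi>"

definition iff :: "nat \<Rightarrow> form \<Rightarrow> form \<Rightarrow> form" where
  "iff n \<phi> \<psi> = conj n (ImpC \<phi> \<psi>) (ImpC \<psi> \<phi>)"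

text \<open>coconcatenation = symmetric difference\<close>
definition cocat :: "nat set \<Rightarrow> nat set \<Rightarrow> nat set" where
  "cocat c d = (c - d) \<union> (d - c)"

definition chain :: "nat \<Rightarrow> nat set \<Rightarrow> bool" where
  "chain n c = (c \<noteq> {} \<and> c \<subseteq> {1..n})"

inductive axiom :: "nat \<Rightarrow> form \<Rightarrow> bool" for n where
  A1: "\<lbrakk>wf n \<phi>; wf n \<psi>\<rbrakk> \<Longrightarrow> axiom n (ImpC \<phi> (ImpC \<psi> \<phi>))"
| A2: "\<lbrakk>wf n \<phi>; wf n \<psi>; wf n \<chi>\<rbrakk> \<Longrightarrow>
     axiom n (ImpC (ImpC \<phi> (ImpC \<psi> \<chi>)) (ImpC (ImpC \<phi> \<psi>) (ImpC \<phi> \<chi>)))"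
| A3: "\<lbrakk>wf n \<phi>; wf n \<psi>\<rbrakk> \<Longrightarrow>
     axiom n (ImpC (ImpC (sneg n \<psi>) (sneg n \<phi>)) (ImpC (ImpC (sneg n \<psi>) \<phi>) \<psi>))"
| A4: "\<lbrakk>wf n \<phi>; chain n c\<rbrakk> \<Longrightarrow> axiom n (ImpC \<phi> (ImpC (bot c) (neg c \<phi>)))"
| A5: "\<lbrakk>wf n \<phi>; chain n c; chain n d\<rbrakk> \<Longrightarrow>
     axiom n (iff n (neg c (neg d \<phi>)) (neg (cocat c d) \<phi>))"
| A6: "\<lbrakk>chain n c; chain n d\<rbrakk> \<Longrightarrow>
     axiom n (iff n (neg c (bot d)) (bot (cocat c d)))"
| A7: "\<lbrakk>chain n c; chain n d; d \<subseteq> c\<rbrakk> \<Longrightarrow> axiom n (ImpC (bot c) (bot d))"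

inductive derivable :: "nat \<Rightarrow> form set \<Rightarrow> form \<Rightarrow> bool" for n \<Sigma> where
  ax: "axiom n \<phi> \<Longrightarrow> derivable n \<Sigma> \<phi>"
| hyp: "\<phi> \<in> \<Sigma> \<Longrightarrow> derivable n \<Sigma> \<phi>"
| mp: "\<lbrakk>derivable n \<Sigma> \<phi>; derivable n \<Sigma> (ImpC \<phi> \<psi>)\<rbrakk> \<Longrightarrow> derivable n \<Sigma> \<psi>"

abbreviation provable :: "nat \<Rightarrow> form \<Rightarrow> bool" where
  "provable n \<phi> \<equiv> derivable n {} \<phi>"

end

theory Submission imports Defs begin

text \<open>Let \<open>c'\<close> be the complement of \<open>c\<close>. Under the hypothesis \<open>\<bottom>\<^sub>c\<close> the weak negation
\<open>\<not>\<^sub>c\<close> behaves as the identity (A4 gives \<open>X \<rightarrow> \<not>\<^sub>c X\<close>, and A5 with \<open>c \<otimes> c = \<epsilon>\<close> undoes it),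
whereas under \<open>\<bottom>\<^sub>c\<^sub>'\<close> it behaves as the strong negation (apply A4 for \<open>c'\<close>, then A5 with
\<open>c' \<otimes> c = (n)\<close>). By A6, \<open>\<not>\<^sub>(\<^sub>n\<^sub>) \<bottom>\<^sub>c \<leftrightarrow> \<bottom>\<^sub>c\<^sub>'\<close>, so \<open>\<bottom>\<^sub>c \<or> \<bottom>\<^sub>c\<^sub>'\<close> is a theorem, and (ii)--(v)
follow by cases: for the identity they are trivial, for the strong negation they are the
classical De Morgan laws. Symmetrically, under \<open>\<bottom>\<^sub>c\<close> the negation \<open>\<not>\<^sub>c\<^sub>'\<close> is the strong one,
which turns (i) into the law of non-contradiction.\<close>

abbreviation wf_hyps :: "nat \<Rightarrow> form set \<Rightarrow> bool" where
  "wf_hyps n \<Sigma> \<equiv> \<forall>x\<in>\<Sigma>. wf n x"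

definition neg_equiv :: "nat \<Rightarrow> form set \<Rightarrow> nat set \<Rightarrow> (form \<Rightarrow> form) \<Rightarrow> bool" where
  "neg_equiv n \<Sigma> c N \<longleftrightarrow> (\<forall>X. wf n X \<longrightarrow>
     derivable n \<Sigma> (ImpC (neg c X) (N X)) \<and> derivable n \<Sigma> (ImpC (N X) (neg c X)))"

definition negation_laws :: "nat \<Rightarrow> form set \<Rightarrow> (form \<Rightarrow> form) \<Rightarrow> form \<Rightarrow> form \<Rightarrow> bool" where
  "negation_laws n \<Sigma> N \<phi> \<psi> \<longleftrightarrow>
     derivable n \<Sigma> (ImpC (conj n (N \<phi>) (N \<psi>)) (N (conj n \<phi> \<psi>))) \<and>
     derivable n \<Sigma> (ImpC (N (disj n \<phi> \<psi>)) (disj n (N \<phi>) (N \<psi>))) \<and>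
     derivable n \<Sigma> (ImpC (N (conj n \<phi> \<psi>)) (disj n (N \<phi>) (N \<psi>))) \<and>
     derivable n \<Sigma> (ImpC (conj n (N \<phi>) (N \<psi>)) (N (disj n \<phi> \<psi>)))"

lemma wf_neg [simp]: "c \<subseteq> {1..n} \<Longrightarrow> wf n (neg c A) \<longleftrightarrow> wf n A"
  by (auto simp: neg_def)

lemma wf_bot [simp]: "c \<subseteq> {1..n} \<Longrightarrow> wf n (bot c)"
  by (auto simp: bot_def)

lemma neg_empty [simp]: "neg {} A = A"
  by (simp add: neg_def)

lemma cocat_self [simp]: "cocat c c = {}"
  by (auto simp: cocat_def)

lemma derivable_mono: "derivable n \<Sigma> A \<Longrightarrow> \<Sigma> \<subseteq> \<Sigma>' \<Longrightarrow> derivable n \<Sigma>' A"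
  by (induction rule: derivable.induct) (auto intro: derivable.intros)

lemma derivable_insert: "derivable n \<Sigma> A \<Longrightarrow> derivable n (insert B \<Sigma>) A"
  using derivable_mono by blast

lemma derivable_inserted: "derivable n (insert A \<Sigma>) A"
  by (simp add: derivable.hyp)

lemma derivable_insert_insert: "derivable n (insert A \<Sigma>) B \<Longrightarrow> derivable n (insert A (insert C \<Sigma>)) B"
  by (erule derivable_mono) blast

lemma derivable_mp: "derivable n \<Sigma> (ImpC A B) \<Longrightarrow> derivable n \<Sigma> A \<Longrightarrow> derivable n \<Sigma> B"
  using derivable.mp by blast

context
  fixes n :: nat
  assumes n_pos: "n \<ge> 1"
begin

lemma wf_sneg [simp]: "wf n (sneg n A) \<longleftrightarrow> wf n A"
  using n_pos by (auto simp: sneg_def full_def)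

lemma neg_full: "neg {1..n} A = sneg n A"
  using n_pos by (simp add: neg_def sneg_def full_def)

lemma chain_full: "chain n {1..n}"
  using n_pos by (auto simp: chain_def)

lemma wf_conj [simp]: "wf n (conj n A B) \<longleftrightarrow> wf n A \<and> wf n B"
  by (simp add: conj_def)

lemma wf_disj [simp]: "wf n (disj n A B) \<longleftrightarrow> wf n A \<and> wf n B"
  by (simp add: disj_def)

lemma wf_iff [simp]: "wf n (iff n A B) \<longleftrightarrow> wf n A \<and> wf n B"
  by (auto simp: iff_def)

lemma axiom_wf: "axiom n A \<Longrightarrow> wf n A"
  by (induction rule: axiom.induct) (auto simp: chain_def neg_def bot_def cocat_def)

lemma derivable_wf: "derivable n \<Sigma> A \<Longrightarrow> wf_hyps n \<Sigma> \<Longrightarrow> wf n A"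
  by (induction rule: derivable.induct) (auto simp: axiom_wf)


subsection \<open>Classical propositional logic for the strong negation\<close>

lemma imp_refl: "wf n A \<Longrightarrow> derivable n \<Sigma> (ImpC A A)"
proof -
  assume "wf n A"
  then have "derivable n \<Sigma> (ImpC (ImpC A (ImpC (ImpC A A) A)) (ImpC (ImpC A (ImpC A A)) (ImpC A A)))"
    and "derivable n \<Sigma> (ImpC A (ImpC (ImpC A A) A))"
    and "derivable n \<Sigma> (ImpC A (ImpC A A))"
    by (auto intro!: derivable.ax axiom.A1 axiom.A2)
  then show ?thesis
    using derivable_mp by blast
qed

lemma deduction:
  "derivable n (insert A \<Sigma>) B \<Longrightarrow> wf_hyps n \<Sigma> \<Longrightarrow> wf n A \<Longrightarrow> derivable n \<Sigma> (ImpC A B)"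
proof (induction rule: derivable.induct)
  case (ax B)
  then have "derivable n \<Sigma> (ImpC B (ImpC A B))"
    by (intro derivable.ax axiom.A1) (auto intro: axiom_wf)
  with ax show ?case
    using derivable_mp derivable.ax by blast
next
  case (hyp B)
  show ?case
  proof (cases "B = A")
    case True
    with hyp show ?thesis
      using imp_refl by simp
  next
    case False
    with hyp have "B \<in> \<Sigma>"
      by simp
    moreover from hyp this have "derivable n \<Sigma> (ImpC B (ImpC A B))"
      by (intro derivable.ax axiom.A1) auto
    ultimately show ?thesis
      using derivable_mp derivable.hyp by blast
  qed
next
  case (mp B C)
  have "wf n (ImpC B C)"
    using derivable_wf[OF mp.hyps(2)] mp.prems by simp
  with mp.prems have "derivable n \<Sigma> (ImpC (ImpC A (ImpC B C)) (ImpC (ImpC A B) (ImpC A C)))"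
    by (intro derivable.ax axiom.A2) auto
  with mp show ?case
    using derivable_mp by blast
qed

lemma cut: "derivable n (insert A \<Sigma>) B \<Longrightarrow> derivable n \<Sigma> A \<Longrightarrow> wf_hyps n \<Sigma> \<Longrightarrow> derivable n \<Sigma> B"
  using deduction derivable_wf derivable_mp by blast

lemma imp_trans:
  assumes "derivable n \<Sigma> (ImpC A B)" "derivable n \<Sigma> (ImpC B C)" "wf_hyps n \<Sigma>"
  shows "derivable n \<Sigma> (ImpC A C)"
proof -
  have "derivable n (insert A \<Sigma>) B"
    using derivable_mp[OF derivable_insert[OF assms(1)] derivable_inserted] .
  then have "derivable n (insert A \<Sigma>) C"
    using derivable_mp[OF derivable_insert[OF assms(2)]] by blast
  moreover have "wf n A"
    using derivable_wf[OF assms(1,3)] by simp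
  ultimately show ?thesis
    using deduction assms(3) by blast
qed

lemma by_contradiction:
  assumes "derivable n (insert (sneg n A) \<Sigma>) B" "derivable n (insert (sneg n A) \<Sigma>) (sneg n B)"
    and "wf_hyps n \<Sigma>" "wf n A"
  shows "derivable n \<Sigma> A"
proof -
  have "wf n B"
    using derivable_wf[OF assms(1)] assms by simp
  then have "derivable n \<Sigma> (ImpC (ImpC (sneg n A) (sneg n B)) (ImpC (ImpC (sneg n A) B) A))"
    using assms by (intro derivable.ax axiom.A3)
  moreover have "derivable n \<Sigma> (ImpC (sneg n A) B)" "derivable n \<Sigma> (ImpC (sneg n A) (sneg n B))"
    using deduction assms by simp_all
  ultimately show ?thesis
    using derivable_mp by blast
qed

lemma double_neg_elim: "derivable n \<Sigma> (sneg n (sneg n A)) \<Longrightarrow> wf_hyps n \<Sigma> \<Longrightarrow> derivable n \<Sigma> A"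
  using by_contradiction[OF derivable_inserted derivable_insert] derivable_wf by fastforce

lemma ex_falso:
  "derivable n \<Sigma> A \<Longrightarrow> derivable n \<Sigma> (sneg n A) \<Longrightarrow> wf_hyps n \<Sigma> \<Longrightarrow> wf n B \<Longrightarrow> derivable n \<Sigma> B"
  using by_contradiction[OF derivable_insert derivable_insert] by blast

lemma neg_intro:
  assumes "derivable n (insert A \<Sigma>) B" "derivable n (insert A \<Sigma>) (sneg n B)"
    and "wf_hyps n \<Sigma>" "wf n A"
  shows "derivable n \<Sigma> (sneg n A)"
proof -
  let ?\<Sigma> = "insert (sneg n (sneg n A)) \<Sigma>"
  have hyps: "wf_hyps n ?\<Sigma>"
    using assms by simp
  have "derivable n ?\<Sigma> A"
    using double_neg_elim[OF derivable_inserted hyps] .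
  then have "derivable n ?\<Sigma> B" "derivable n ?\<Sigma> (sneg n B)"
    using cut[OF derivable_insert_insert[OF assms(1)]] cut[OF derivable_insert_insert[OF assms(2)]] hyps
    by blast+
  then show ?thesis
    using by_contradiction assms by simp
qed

lemma der_conjI:
  assumes "derivable n \<Sigma> A" "derivable n \<Sigma> B" "wf_hyps n \<Sigma>"
  shows "derivable n \<Sigma> (conj n A B)"
proof -
  have "wf n A" "wf n B"
    using derivable_wf assms by auto
  moreover have "derivable n (insert (ImpC A (sneg n B)) \<Sigma>) (sneg n B)"
    using derivable_mp[OF derivable_inserted derivable_insert[OF assms(1)]] .
  ultimately show ?thesis
    unfolding conj_def using neg_intro[OF derivable_insert[OF assms(2)]] assms(3) by simp
qed

lemma der_conjE1:
  assumes "derivable n \<Sigma> (conj n A B)" "wf_hyps n \<Sigma>"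
  shows "derivable n \<Sigma> A"
proof -
  let ?\<Sigma> = "insert (sneg n A) \<Sigma>"
  have wf: "wf n A" "wf n B" "wf_hyps n ?\<Sigma>"
    using derivable_wf[OF assms] assms(2) by auto
  then have "derivable n (insert A ?\<Sigma>) (sneg n B)"
    using ex_falso[OF derivable_inserted derivable_insert[OF derivable_inserted]] by simp
  then have "derivable n ?\<Sigma> (ImpC A (sneg n B))"
    using deduction wf by blast
  moreover have "derivable n ?\<Sigma> (sneg n (ImpC A (sneg n B)))"
    using derivable_insert[OF assms(1)] by (simp add: conj_def)
  ultimately show ?thesis
    using by_contradiction assms wf by blast
qed

lemma der_conjE2:
  assumes "derivable n \<Sigma> (conj n A B)" "wf_hyps n \<Sigma>"
  shows "derivable n \<Sigma> B"
proof -
  let ?\<Sigma> = "insert (sneg n B) \<Sigma>"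
  have wf: "wf n A" "wf n B" "wf_hyps n ?\<Sigma>"
    using derivable_wf[OF assms] assms(2) by auto
  then have "derivable n ?\<Sigma> (ImpC A (sneg n B))"
    using deduction derivable_insert[OF derivable_inserted] by blast
  moreover have "derivable n ?\<Sigma> (sneg n (ImpC A (sneg n B)))"
    using derivable_insert[OF assms(1)] by (simp add: conj_def)
  ultimately show ?thesis
    using by_contradiction assms wf by blast
qed

lemma der_disjI1:
  assumes "derivable n \<Sigma> A" "wf n B" "wf_hyps n \<Sigma>"
  shows "derivable n \<Sigma> (disj n A B)"
proof -
  have "wf n A"
    using derivable_wf assms by auto
  moreover have "derivable n (insert (sneg n A) \<Sigma>) B"
    using ex_falso[OF derivable_insert[OF assms(1)] derivable_inserted] assms calculation by simp
  ultimately show ?thesis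
    unfolding disj_def using deduction assms by simp
qed

lemma der_disjI2:
  assumes "derivable n \<Sigma> B" "wf n A" "wf_hyps n \<Sigma>"
  shows "derivable n \<Sigma> (disj n A B)"
  unfolding disj_def using deduction[OF derivable_insert[OF assms(1)]] assms(2,3) by simp

lemma der_disjE:
  assumes "derivable n \<Sigma> (disj n A B)" "derivable n (insert A \<Sigma>) C"
    and "derivable n (insert B \<Sigma>) C" "wf_hyps n \<Sigma>"
  shows "derivable n \<Sigma> C"
proof -
  have wf: "wf n A" "wf n B"
    using derivable_wf[OF assms(1,4)] by auto
  then have wf_C: "wf n C"
    using derivable_wf[OF assms(2)] assms(4) by simp
  let ?\<Sigma> = "insert (sneg n C) \<Sigma>"
  have hyps: "wf_hyps n ?\<Sigma>"
    using assms(4) wf_C by simp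
  have "derivable n ?\<Sigma> (sneg n A)"
    using neg_intro[OF derivable_insert_insert[OF assms(2)] derivable_insert[OF derivable_inserted]
        hyps wf(1)] .
  then have "derivable n ?\<Sigma> B"
    using derivable_mp[OF derivable_insert[OF assms(1)[unfolded disj_def]]] by blast
  then have "derivable n ?\<Sigma> C"
    using cut[OF derivable_insert_insert[OF assms(3)] _ hyps] by blast
  then show ?thesis
    using by_contradiction[OF _ derivable_inserted assms(4) wf_C] by blast
qed

lemma der_iffD1: "derivable n \<Sigma> (iff n A B) \<Longrightarrow> wf_hyps n \<Sigma> \<Longrightarrow> derivable n \<Sigma> (ImpC A B)"
  unfolding iff_def using der_conjE1 by blast

lemma der_iffD2: "derivable n \<Sigma> (iff n A B) \<Longrightarrow> wf_hyps n \<Sigma> \<Longrightarrow> derivable n \<Sigma> (ImpC B A)"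
  unfolding iff_def using der_conjE2 by blast

lemma conj_mono:
  assumes "derivable n \<Sigma> (ImpC A A')" "derivable n \<Sigma> (ImpC B B')" "wf_hyps n \<Sigma>"
  shows "derivable n \<Sigma> (ImpC (conj n A B) (conj n A' B'))"
proof -
  let ?\<Sigma> = "insert (conj n A B) \<Sigma>"
  have wf: "wf n A" "wf n B"
    using derivable_wf[OF assms(1,3)] derivable_wf[OF assms(2,3)] by simp_all
  then have hyps: "wf_hyps n ?\<Sigma>"
    using assms(3) by simp
  have "derivable n ?\<Sigma> A'"
    using derivable_mp[OF derivable_insert[OF assms(1)] der_conjE1[OF derivable_inserted hyps]] .
  moreover have "derivable n ?\<Sigma> B'"
    using derivable_mp[OF derivable_insert[OF assms(2)] der_conjE2[OF derivable_inserted hyps]] .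
  ultimately show ?thesis
    using deduction[OF der_conjI] hyps assms(3) wf by simp
qed

lemma disj_mono:
  assumes "derivable n \<Sigma> (ImpC A A')" "derivable n \<Sigma> (ImpC B B')" "wf_hyps n \<Sigma>"
  shows "derivable n \<Sigma> (ImpC (disj n A B) (disj n A' B'))"
proof -
  let ?\<Sigma> = "insert (disj n A B) \<Sigma>"
  have wf: "wf n A" "wf n A'" "wf n B" "wf n B'"
    using derivable_wf[OF assms(1,3)] derivable_wf[OF assms(2,3)] by simp_all
  then have hyps: "wf_hyps n ?\<Sigma>"
    using assms(3) by simp
  have "derivable n (insert A ?\<Sigma>) (disj n A' B')"
    using der_disjI1[OF derivable_mp[OF derivable_insert[OF derivable_insert[OF assms(1)]]]] hyps wf
    by (simp add: derivable_inserted)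
  moreover have "derivable n (insert B ?\<Sigma>) (disj n A' B')"
    using der_disjI2[OF derivable_mp[OF derivable_insert[OF derivable_insert[OF assms(2)]]]] hyps wf
    by (simp add: derivable_inserted)
  ultimately show ?thesis
    using deduction[OF der_disjE[OF derivable_inserted]] hyps assms(3) wf by simp
qed

lemma negation_laws_id:
  assumes "wf_hyps n \<Sigma>" "wf n \<phi>" "wf n \<psi>"
  shows "negation_laws n \<Sigma> id \<phi> \<psi>"
proof -
  let ?\<Sigma> = "insert (conj n \<phi> \<psi>) \<Sigma>"
  have "derivable n ?\<Sigma> (disj n \<phi> \<psi>)"
    using der_disjI1[OF der_conjE1[OF derivable_inserted]] assms by simp
  then have "derivable n \<Sigma> (ImpC (conj n \<phi> \<psi>) (disj n \<phi> \<psi>))"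
    using deduction assms by simp
  then show ?thesis
    unfolding negation_laws_def using imp_refl assms by simp
qed

lemma conj_snegs_imp_sneg_conj:
  assumes hyps: "wf_hyps n \<Sigma>" and wf: "wf n \<phi>" "wf n \<psi>"
  shows "derivable n \<Sigma> (ImpC (conj n (sneg n \<phi>) (sneg n \<psi>)) (sneg n (conj n \<phi> \<psi>)))"
proof -
  let ?\<Sigma> = "insert (conj n (sneg n \<phi>) (sneg n \<psi>)) \<Sigma>"
  have hyps': "wf_hyps n ?\<Sigma>"
    using hyps wf by simp
  have not_\<phi>: "derivable n ?\<Sigma> (sneg n \<phi>)"
    using der_conjE1[OF derivable_inserted hyps'] .
  have "derivable n ?\<Sigma> (sneg n (conj n \<phi> \<psi>))"
    using neg_intro[OF der_conjE1[OF derivable_inserted] derivable_insert[OF not_\<phi>]] hyps' wf by simp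
  then show ?thesis
    using deduction hyps wf by simp
qed

lemma conj_snegs_imp_sneg_disj:
  assumes hyps: "wf_hyps n \<Sigma>" and wf: "wf n \<phi>" "wf n \<psi>"
  shows "derivable n \<Sigma> (ImpC (conj n (sneg n \<phi>) (sneg n \<psi>)) (sneg n (disj n \<phi> \<psi>)))"
proof -
  let ?\<Sigma> = "insert (conj n (sneg n \<phi>) (sneg n \<psi>)) \<Sigma>"
  let ?\<Delta> = "insert (disj n \<phi> \<psi>) ?\<Sigma>"
  have hyps': "wf_hyps n ?\<Sigma>" and hyps'': "wf_hyps n ?\<Delta>"
    using hyps wf by simp_all
  have not_\<phi>: "derivable n ?\<Sigma> (sneg n \<phi>)" and not_\<psi>: "derivable n ?\<Sigma> (sneg n \<psi>)"
    using der_conjE1[OF derivable_inserted hyps'] der_conjE2[OF derivable_inserted hyps'] .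
  have "derivable n (insert \<psi> ?\<Delta>) \<phi>"
    using ex_falso[OF derivable_inserted derivable_insert[OF derivable_insert[OF not_\<psi>]]] hyps'' wf
    by simp
  then have "derivable n ?\<Delta> \<phi>"
    using der_disjE[OF derivable_inserted derivable_inserted _ hyps''] by blast
  then have "derivable n ?\<Sigma> (sneg n (disj n \<phi> \<psi>))"
    using neg_intro[OF _ derivable_insert[OF not_\<phi>] hyps'] wf by simp
  then show ?thesis
    using deduction hyps wf by simp
qed

lemma sneg_disj_imp_disj_snegs:
  assumes hyps: "wf_hyps n \<Sigma>" and wf: "wf n \<phi>" "wf n \<psi>"
  shows "derivable n \<Sigma> (ImpC (sneg n (disj n \<phi> \<psi>)) (disj n (sneg n \<phi>) (sneg n \<psi>)))"
proof -
  let ?\<Sigma> = "insert (sneg n (disj n \<phi> \<psi>)) \<Sigma>"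
  have hyps': "wf_hyps n ?\<Sigma>"
    using hyps wf by simp
  have "derivable n ?\<Sigma> (sneg n \<psi>)"
    using neg_intro[OF der_disjI2[OF derivable_inserted] derivable_insert[OF derivable_inserted]] hyps' wf
    by simp
  then have "derivable n ?\<Sigma> (disj n (sneg n \<phi>) (sneg n \<psi>))"
    using der_disjI2 hyps' wf by simp
  then show ?thesis
    using deduction hyps wf by simp
qed

lemma sneg_conj_imp_disj_snegs:
  assumes hyps: "wf_hyps n \<Sigma>" and wf: "wf n \<phi>" "wf n \<psi>"
  shows "derivable n \<Sigma> (ImpC (sneg n (conj n \<phi> \<psi>)) (disj n (sneg n \<phi>) (sneg n \<psi>)))"
proof -
  let ?\<Sigma> = "insert (sneg n (sneg n \<phi>)) (insert (sneg n (conj n \<phi> \<psi>)) \<Sigma>)"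
  have hyps': "wf_hyps n ?\<Sigma>"
    using hyps wf by simp
  have "derivable n ?\<Sigma> \<phi>"
    using double_neg_elim[OF derivable_inserted hyps'] .
  then have "derivable n ?\<Sigma> (sneg n \<psi>)"
    using neg_intro[OF der_conjI[OF derivable_insert derivable_inserted]
        derivable_insert[OF derivable_insert[OF derivable_inserted]]] hyps' wf
    by simp
  then show ?thesis
    unfolding disj_def using deduction[OF deduction] hyps wf by simp
qed

lemma negation_laws_sneg:
  assumes "wf_hyps n \<Sigma>" "wf n \<phi>" "wf n \<psi>"
  shows "negation_laws n \<Sigma> (sneg n) \<phi> \<psi>"
  unfolding negation_laws_def
  using conj_snegs_imp_sneg_conj[OF assms] conj_snegs_imp_sneg_disj[OF assms]
    sneg_disj_imp_disj_snegs[OF assms] sneg_conj_imp_disj_snegs[OF assms] by blast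

subsection \<open>Weak negations under the hypotheses \<open>\<bottom>\<^sub>c\<close> and \<open>\<bottom>\<^sub>c\<^sub>'\<close>\<close>

lemma negation_laws_transfer:
  assumes "neg_equiv n \<Sigma> c N" "negation_laws n \<Sigma> N \<phi> \<psi>"
    and "wf_hyps n \<Sigma>" "wf n \<phi>" "wf n \<psi>"
  shows "negation_laws n \<Sigma> (neg c) \<phi> \<psi>"
proof -
  have to_N: "\<And>X. wf n X \<Longrightarrow> derivable n \<Sigma> (ImpC (neg c X) (N X))"
    and from_N: "\<And>X. wf n X \<Longrightarrow> derivable n \<Sigma> (ImpC (N X) (neg c X))"
    using assms(1) unfolding neg_equiv_def by blast+
  note trans = imp_trans[OF _ _ assms(3)]
  show ?thesis
    using assms(2,4,5) unfolding negation_laws_def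
    by (intro conjI trans[OF trans[OF conj_mono[OF to_N to_N assms(3)]] from_N]
        trans[OF trans[OF to_N] disj_mono[OF from_N from_N assms(3)]]) auto
qed

lemma negation_laws_by_cases:
  assumes "derivable n \<Sigma> (disj n A B)"
    and "negation_laws n (insert A \<Sigma>) N \<phi> \<psi>" "negation_laws n (insert B \<Sigma>) N \<phi> \<psi>"
    and "wf_hyps n \<Sigma>"
  shows "negation_laws n \<Sigma> N \<phi> \<psi>"
  using assms(2,3) der_disjE[OF assms(1) _ _ assms(4)] unfolding negation_laws_def by blast

lemma neg_equivI:
  assumes "\<And>X. wf n X \<Longrightarrow> derivable n (insert (neg c X) \<Sigma>) (N X)"
    and "\<And>X. wf n X \<Longrightarrow> derivable n (insert (N X) \<Sigma>) (neg c X)"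
    and "\<And>X. wf n X \<Longrightarrow> wf n (N X)" "c \<subseteq> {1..n}" "wf_hyps n \<Sigma>"
  shows "neg_equiv n \<Sigma> c N"
  unfolding neg_equiv_def using assms deduction by simp

lemma bot_neg_intro:
  assumes "chain n c" "bot c \<in> \<Sigma>" "derivable n \<Sigma> X" "wf_hyps n \<Sigma>"
  shows "derivable n \<Sigma> (neg c X)"
proof -
  have "derivable n \<Sigma> (ImpC X (ImpC (bot c) (neg c X)))"
    using derivable_wf[OF assms(3,4)] assms(1) by (intro derivable.ax axiom.A4)
  then show ?thesis
    using derivable_mp assms(3) derivable.hyp[OF assms(2)] by blast
qed

lemma ex_falso_bot_full:
  assumes "bot {1..n} \<in> \<Sigma>" "wf_hyps n \<Sigma>" "wf n X"
  shows "derivable n \<Sigma> X"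
proof -
  let ?\<Sigma> = "insert (sneg n X) \<Sigma>"
  have "derivable n ?\<Sigma> (neg {1..n} (sneg n X))"
    using bot_neg_intro[OF chain_full _ derivable_inserted] assms by simp
  then show ?thesis
    using by_contradiction[OF derivable_inserted] assms unfolding neg_full by simp
qed

lemma neg_equiv_id_of_bot:
  assumes c: "chain n c" and "bot c \<in> \<Sigma>" "wf_hyps n \<Sigma>"
  shows "neg_equiv n \<Sigma> c id"
proof (rule neg_equivI)
  have c_sub: "c \<subseteq> {1..n}"
    using c by (simp add: chain_def)
  then show "c \<subseteq> {1..n}" .
  fix X
  assume wf_X: "wf n X"
  let ?\<Sigma> = "insert (neg c X) \<Sigma>"
  have hyps: "wf_hyps n ?\<Sigma>"
    using assms c_sub wf_X by simp
  have "derivable n ?\<Sigma> (iff n (neg c (neg c X)) (neg (cocat c c) X))"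
    using wf_X c by (intro derivable.ax axiom.A5)
  then have "derivable n ?\<Sigma> (ImpC (neg c (neg c X)) X)"
    using der_iffD1 hyps by simp
  moreover have "derivable n ?\<Sigma> (neg c (neg c X))"
    using bot_neg_intro[OF c _ derivable_inserted hyps] assms by simp
  ultimately show "derivable n ?\<Sigma> (id X)"
    using derivable_mp by simp
  show "derivable n (insert (id X) \<Sigma>) (neg c X)"
    using bot_neg_intro[OF c _ derivable_inserted] assms wf_X by simp
qed (use assms in simp_all)

lemma neg_equiv_sneg_of_bot_compl_chain:
  assumes c: "chain n c" and b: "chain n ({1..n} - c)"
    and bot_b: "bot ({1..n} - c) \<in> \<Sigma>" and hyps: "wf_hyps n \<Sigma>"
  shows "neg_equiv n \<Sigma> c (sneg n)"
proof (rule neg_equivI)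
  let ?b = "{1..n} - c"
  have c_sub: "c \<subseteq> {1..n}"
    using c by (simp add: chain_def)
  then have cocat: "cocat ?b c = {1..n}"
    by (auto simp: cocat_def)
  have A5: "derivable n \<Sigma>' (iff n (neg ?b (neg c X)) (sneg n X))" if "wf n X" for \<Sigma>' X
    using derivable.ax[OF axiom.A5[OF that b c]] unfolding cocat neg_full .
  fix X
  assume wf_X: "wf n X"
  let ?\<Sigma>\<^sub>c = "insert (neg c X) \<Sigma>"
  have hyps_c: "wf_hyps n ?\<Sigma>\<^sub>c"
    using hyps wf_X c_sub by simp
  have "derivable n ?\<Sigma>\<^sub>c (neg ?b (neg c X))"
    using bot_neg_intro[OF b _ derivable_inserted hyps_c] bot_b by simp
  then show "derivable n ?\<Sigma>\<^sub>c (sneg n X)"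
    using derivable_mp[OF der_iffD1[OF A5[OF wf_X] hyps_c]] by blast
  let ?\<Sigma>\<^sub>s = "insert (sneg n X) \<Sigma>"
  have hyps_s: "wf_hyps n ?\<Sigma>\<^sub>s"
    using hyps wf_X by simp
  have "derivable n ?\<Sigma>\<^sub>s (neg ?b (neg c X))"
    using derivable_mp[OF der_iffD2[OF A5[OF wf_X] hyps_s] derivable_inserted] .
  moreover have "derivable n ?\<Sigma>\<^sub>s (ImpC (neg ?b (neg c X)) (neg c X))"
    using neg_equiv_id_of_bot[OF b _ hyps_s] bot_b wf_X c_sub unfolding neg_equiv_def by simp
  ultimately show "derivable n ?\<Sigma>\<^sub>s (neg c X)"
    using derivable_mp by blast
qed (use assms in \<open>simp_all add: chain_def\<close>)

text \<open>The degenerate cases are \<open>c = (n)\<close>, where there is nothing to prove, and \<open>c = \<epsilon>\<close>,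
where the hypothesis is the contradiction \<open>\<bottom>\<^sub>(\<^sub>n\<^sub>)\<close>.\<close>

lemma neg_equiv_sneg_of_bot_compl:
  assumes c_sub: "c \<subseteq> {1..n}" and bot_b: "bot ({1..n} - c) \<in> \<Sigma>" and hyps: "wf_hyps n \<Sigma>"
  shows "neg_equiv n \<Sigma> c (sneg n)"
proof -
  consider "c = {}" | "c = {1..n}" | "chain n c" "chain n ({1..n} - c)"
    using c_sub unfolding chain_def by blast
  then show ?thesis
  proof cases
    case 1
    then show ?thesis
      using assms ex_falso_bot_full by (intro neg_equivI) simp_all
  next
    case 2
    show ?thesis
      unfolding 2 using hyps
      by (intro neg_equivI) (simp_all add: neg_full derivable_inserted del: One_nat_def)
  next
    case 3
    then show ?thesis
      using neg_equiv_sneg_of_bot_compl_chain bot_b hyps by blast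
  qed
qed

lemma bot_or_bot_compl:
  assumes "chain n c"
  shows "provable n (disj n (bot c) (bot ({1..n} - c)))"
proof -
  have cocat: "cocat {1..n} c = {1..n} - c"
    using assms by (auto simp: cocat_def chain_def)
  have "provable n (iff n (sneg n (bot c)) (bot ({1..n} - c)))"
    using derivable.ax[OF axiom.A6[OF chain_full assms]] unfolding cocat neg_full .
  then show ?thesis
    unfolding disj_def using der_iffD1 by blast
qed

lemma bot_imp_compl_non_contradiction:
  assumes c: "chain n c" and wf_\<phi>: "wf n \<phi>"
  defines "c' \<equiv> {1..n} - c"
  shows "provable n (ImpC (bot c) (neg c' (conj n \<phi> (neg c' \<phi>))))"
proof -
  have c_sub: "c \<subseteq> {1..n}" and c'_sub: "c' \<subseteq> {1..n}"
    using c by (auto simp: chain_def c'_def)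
  have "neg_equiv n {bot c} c' (sneg n)"
    using neg_equiv_sneg_of_bot_compl[OF c'_sub] c_sub unfolding c'_def by (simp add: double_diff)
  then have to_N: "derivable n {bot c} (ImpC (neg c' X) (sneg n X))"
    and from_N: "derivable n {bot c} (ImpC (sneg n X) (neg c' X))" if "wf n X" for X
    using that unfolding neg_equiv_def by blast+
  let ?H = "conj n \<phi> (neg c' \<phi>)"
  let ?\<Sigma> = "{?H, bot c}"
  have hyps: "wf_hyps n ?\<Sigma>"
    using wf_\<phi> c_sub c'_sub by simp
  have "derivable n ?\<Sigma> (sneg n \<phi>)"
    using derivable_mp[OF derivable_insert[OF to_N[OF wf_\<phi>]] der_conjE2[OF derivable_inserted hyps]] .
  then have "derivable n {bot c} (sneg n ?H)"
    using neg_intro[OF der_conjE1[OF derivable_inserted hyps]] wf_\<phi> c_sub c'_sub by simp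
  then have "derivable n {bot c} (neg c' ?H)"
    using derivable_mp[OF from_N] wf_\<phi> c'_sub by simp
  then show ?thesis
    using deduction c_sub by simp
qed

lemma neg_chain_negation_laws:
  assumes c: "chain n c" and "wf n \<phi>" "wf n \<psi>"
  shows "negation_laws n {} (neg c) \<phi> \<psi>"
proof -
  let ?c' = "{1..n} - c"
  have c_sub: "c \<subseteq> {1..n}"
    using c by (simp add: chain_def)
  have "negation_laws n {bot c} (neg c) \<phi> \<psi>"
    using negation_laws_transfer[OF neg_equiv_id_of_bot[OF c] negation_laws_id] assms c_sub by simp
  moreover have "negation_laws n {bot ?c'} (neg c) \<phi> \<psi>"
    using negation_laws_transfer[OF neg_equiv_sneg_of_bot_compl[OF c_sub] negation_laws_sneg]
      assms c_sub by simp
  ultimately show ?thesis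
    using negation_laws_by_cases[OF bot_or_bot_compl[OF c]] by simp
qed

end

theorem mainTheorem6:
  fixes n :: nat and c :: "nat set" and \<phi> \<psi> :: form
  assumes "n \<ge> 1" and "chain n c" and "wf n \<phi>" and "wf n \<psi>"
  defines "c' \<equiv> {1..n} - c"
  shows "(provable n (ImpC (bot c) (neg c' (conj n \<phi> (neg c' \<phi>))))) \<and>
           (provable n (ImpC (conj n (neg c \<phi>) (neg c \<psi>)) (neg c (conj n \<phi> \<psi>)))) \<and>
           (provable n (ImpC (neg c (disj n \<phi> \<psi>)) (disj n (neg c \<phi>) (neg c \<psi>)))) \<and>
           (provable n (ImpC (neg c (conj n \<phi> \<psi>)) (disj n (neg c \<phi>) (neg c \<psi>)))) \<and>
           (provable n (ImpC (conj n (neg c \<phi>) (neg c \<psi>)) (neg c (disj n \<phi> \<psi>))))"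
  using bot_imp_compl_non_contradiction[OF assms(1,2,3)] neg_chain_negation_laws[OF assms(1-4)]
  unfolding c'_def negation_laws_def by blast

end
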